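(* Let $\mu\in\{0,1\}$. The irreducible $\mathcal{A}_2$-highest weight module $\mathcal{L}^{(2)}_\mu$ generated from $|\psi_\mu\rangle$ is spanned by the states $$\phi^{(m_1)}_{r_1}\cdots\phi^{(m_\ell)}_{r_\ell}|\psi_\mu\rangle\qquad(\ell\geq0,\ m_i\in\{0,1,2\},\ r_i\in\mathbb{Z}+(\mu-1)/2),$$ satisfying $r_\ell\leq\theta^{(m_\ell,0)}_\mu-\tfrac12$, $r_i\leq r_{i+1}$ for all $i$, and $r_i=r_{i+1}$ implies $m_i>m_{i+1}$. Here $\theta^{(m,0)}_0=0$ for all $m$, while $\theta^{(0,0)}_1=-\tfrac12$ and $\theta^{(1,0)}_1=\theta^{(2,0)}_1=\tfrac12$.
   Context: Level $k=2$. Affine algebra: the level-2 affine $\mathfrak{sl}(2)$ chiral algebra has modes $E_n,H_n,F_n$ ($n\in\mathbb{Z}$) with $[H_m,E_n]=2E_{m+n}$, $[H_m,F_n]=-2F_{m+n}$, $[E_m,F_n]=H_{m+n}+2m\delta_{m+n,0}$, $[H_m,H_n]=4m\delta_{m+n,0}$, $[E_m,E_n]=[F_m,F_n]=0$; Virasoro modes by Sugawara $L_n=\frac18\sum_m:\tfrac12H_mH_{n-m}+E_mF_{n-m}+F_mE_{n-m}:$. $|0\rangle=|\psi_0\rangle$ is the vacuum and $|\psi_1\rangle$ the unit-norm affine highest weight state of weight 1 and conformal dimension $3/16$. Extended algebra $\mathcal{A}_2$: the simple current (weight 2, dimension $1/2$) has component fields $\phi^{(m)}(z)$, $m=0,1,2$,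 of conformal dimension $1/2$, with modes $\phi^{(m)}_r$. $\mathcal{A}_2$ is the $*$-algebra generated by these modes (adjoint $(\phi^{(m)}_r)^\dagger=\phi^{(2-m)}_{-r}$) containing the affine modes, with $\{E_r,\phi^{(m)}_s\}=[m(3-m)]^{1/2}\phi^{(m-1)}_{r+s}$, $[H_r,\phi^{(m)}_s]=(2-2m)\phi^{(m)}_{r+s}$, $\{F_r,\phi^{(m)}_s\}=[(m+1)(2-m)]^{1/2}\phi^{(m+1)}_{r+s}$, and generalised commutation relations for every $\gamma\in\mathbb{Z}$: $$\sum_{\ell\geq0}\binom{\ell+\gamma-2}{\ell}\Big[\phi^{(m)}_{r-\ell}\phi^{(n)}_{s+\ell}-(-1)^{m+n+\gamma}\phi^{(n)}_{s+1-\gamma-\ell}\phi^{(m)}_{r-1+\gamma+\ell}\Big]=\mathcal{S}_{m,n}\sum_{j=0}^{\gamma-1}\binom{r-1/2+\gamma-1}{\gamma-1-j}A^{(m,n;j)}_{r+s},$$ where $A^{(m,n;j)}$ are vacuum-module fields from the operator product expansion $\phi^{(m)}(z)\phi^{(n)}(w)=\mathcal{S}_{m,n}\sum_j A^{(m,n;j)}(w)(z-w)^{j-1}$ and $\mathcal{S}_{m,n}$ are central operators acting as nonzero scalars on highest weight modules. In particular ($\gamma=1$) $\phi^{(m)}_r\phi^{(n)}_s+(-1)^{m+n}\phi^{(n)}_s\phi^{(m)}_r=\mathcal{S}_{m,n}\delta_{m+n,2}\delta_{r+s,0}$. Mode indices: acting on a state of monodromy charge $\theta$, $\phi^{(m)}_r$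 has $r\in\mathbb{Z}+\theta-\frac12$; $|\psi_\mu\rangle$ has charge $\mu/2$ and $\phi$-modes shift the charge by $1\equiv0$ mod 1. Moreover $\phi^{(m)}_r|\psi_\mu\rangle=0$ for $r>\theta^{(m,0)}_\mu-\frac12$. An $\mathcal{A}_2$-highest weight module is generated by $\mathcal{A}_2$ from $|\psi_\mu\rangle$, $\mu\in\{0,1\}$. *)

theory Defs
  imports Complex_Main
begin

definition word_act :: "(nat \<Rightarrow> real \<Rightarrow> 'v \<Rightarrow> 'v) \<Rightarrow> (nat \<times> real) list \<Rightarrow> 'v \<Rightarrow> 'v" where
  "word_act phi ws v = foldr (\<lambda>(m, r) x. phi m r x) ws v"

definition mode_index :: "nat \<Rightarrow> real \<Rightarrow> bool" where
  "mode_index mu r \<longleftrightarrow> (\<exists>k::int. r = real_of_int k + (real mu - 1) / 2)"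

definition theta :: "nat \<Rightarrow> nat \<Rightarrow> real" where
  "theta mu m = (if mu = 0 then 0 else if m = 0 then - 1/2 else 1/2)"

definition admissible_word :: "nat \<Rightarrow> (nat \<times> real) list \<Rightarrow> bool" where
  "admissible_word mu ws \<longleftrightarrow> (\<forall>(m, r) \<in> set ws. m \<le> 2 \<and> mode_index mu r)"

definition ordered_word :: "nat \<Rightarrow> (nat \<times> real) list \<Rightarrow> bool" where
  "ordered_word mu ws \<longleftrightarrow> admissible_word mu ws
     \<and> (ws \<noteq> [] \<longrightarrow> snd (last ws) \<le> theta mu (fst (last ws)) - 1/2)
     \<and> (\<forall>i. Suc i < length ws \<longrightarrow>
           snd (ws ! i) \<le> snd (ws ! Suc i)
         \<and> (snd (ws ! i) = snd (ws ! Suc i) \<longrightarrow> fst (ws ! i) > fst (ws ! Suc i)))"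

text \<open>The A_2-module generated from psi: A_2 is generated (as a *-algebra) by the
  phi-modes, whose adjoints are again phi-modes, so the module is the span of all
  admissible words applied to psi.\<close>
definition gen_module :: "(complex \<Rightarrow> 'v::ab_group_add \<Rightarrow> 'v) \<Rightarrow> (nat \<Rightarrow> real \<Rightarrow> 'v \<Rightarrow> 'v) \<Rightarrow> nat \<Rightarrow> 'v \<Rightarrow> 'v set" where
  "gen_module sc phi mu psi = module.span sc {word_act phi ws psi | ws. admissible_word mu ws}"

end

theory Submission
  imports Defs
begin

(* Straightening: by the anticommutation relation a word with an adjacent pair of modes in the
   wrong order equals, up to sign, the word with that pair swapped, plus a multiple of the word
   with the pair deleted; a repeated adjacent mode is half of such a shorter word. A sorted word
   whose last mode lies above the threshold annihilates psi. Induction on the length and then on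
   the number of inversions therefore expresses every word as a combination of ordered ones. *)

definition mode_precedes :: "nat \<times> real \<Rightarrow> nat \<times> real \<Rightarrow> bool" where
  "mode_precedes a b \<longleftrightarrow> snd a < snd b \<or> (snd a = snd b \<and> fst b < fst a)"

lemma mode_precedes_total: "a \<noteq> b \<Longrightarrow> \<not> mode_precedes a b \<Longrightarrow> mode_precedes b a"
  by (auto simp: mode_precedes_def prod_eq_iff)

fun inversions :: "(nat \<times> real) list \<Rightarrow> nat" where
  "inversions [] = 0"
| "inversions (a # ws) = length (filter (\<lambda>b. mode_precedes b a) ws) + inversions ws"

lemma inversions_swap:
  assumes "mode_precedes b a"
  shows "inversions (pre @ b # a # post) < inversions (pre @ a # b # post)"
  using assms by (induction pre) (auto simp: mode_precedes_def)

lemma word_act_Nil [simp]: "word_act phi [] v = v"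
  by (simp add: word_act_def)

lemma word_act_Cons [simp]: "word_act phi ((m, r) # ws) v = phi m r (word_act phi ws v)"
  by (simp add: word_act_def)

lemma word_act_append [simp]: "word_act phi (xs @ ys) v = word_act phi xs (word_act phi ys v)"
  by (simp add: word_act_def)

lemma admissible_word_Cons [simp]:
  "admissible_word mu ((m, r) # ws) \<longleftrightarrow> m \<le> 2 \<and> mode_index mu r \<and> admissible_word mu ws"
  by (simp add: admissible_word_def)

lemma admissible_word_append [simp]:
  "admissible_word mu (xs @ ys) \<longleftrightarrow> admissible_word mu xs \<and> admissible_word mu ys"
  by (auto simp: admissible_word_def)

lemma ordered_word_iff:
  "ordered_word mu ws \<longleftrightarrow> admissible_word mu ws
     \<and> (ws \<noteq> [] \<longrightarrow> snd (last ws) \<le> theta mu (fst (last ws)) - 1/2)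
     \<and> (\<forall>i. Suc i < length ws \<longrightarrow> mode_precedes (ws ! i) (ws ! Suc i))"
  by (auto simp: ordered_word_def mode_precedes_def)

lemma not_sorted_adjacent_split:
  assumes "\<not> (\<forall>i. Suc i < length xs \<longrightarrow> R (xs ! i) (xs ! Suc i))"
  obtains pre a b post where "xs = pre @ a # b # post" and "\<not> R a b"
proof -
  from assms obtain i where i: "Suc i < length xs" and "\<not> R (xs ! i) (xs ! Suc i)"
    by blast
  moreover have "xs = take i xs @ xs ! i # xs ! Suc i # drop (Suc (Suc i)) xs"
    using i by (metis Cons_nth_drop_Suc Suc_lessD append_take_drop_id)
  ultimately show thesis using that by blast
qed

locale mode_module = vector_space sc
  for sc :: "complex \<Rightarrow> 'v::ab_group_add \<Rightarrow> 'v" +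
  fixes phi :: "nat \<Rightarrow> real \<Rightarrow> 'v \<Rightarrow> 'v"
    and S :: "nat \<Rightarrow> nat \<Rightarrow> complex"
    and psi :: 'v
    and mu :: nat
  assumes phi_linear: "\<And>m r. Vector_Spaces.linear sc sc (phi m r)"
    and anticomm: "\<And>m n r s v. m \<le> 2 \<Longrightarrow> n \<le> 2 \<Longrightarrow> mode_index mu r \<Longrightarrow> mode_index mu s \<Longrightarrow>
        v \<in> gen_module sc phi mu psi \<Longrightarrow>
        phi m r (phi n s v) + sc ((-1) ^ (m + n)) (phi n s (phi m r v))
          = (if m + n = 2 \<and> r + s = 0 then sc (S m n) v else 0)"
    and annih: "\<And>m r. m \<le> 2 \<Longrightarrow> mode_index mu r \<Longrightarrow> r > theta mu m - 1/2 \<Longrightarrow> phi m r psi = 0"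
begin

definition ordered_span :: "'v set" where
  "ordered_span = span {word_act phi ws psi | ws. ordered_word mu ws}"

lemma word_act_linear: "Vector_Spaces.linear sc sc (word_act phi ws)"
proof (induction ws)
  case Nil
  then show ?case
    using linear_id by (simp add: id_def)
next
  case (Cons a ws)
  obtain m r where "a = (m, r)" by fastforce
  then have "word_act phi (a # ws) = phi m r \<circ> word_act phi ws"
    by auto
  then show ?case
    using Vector_Spaces.linear_compose[OF Cons phi_linear[of m r]] by metis
qed

lemmas word_act_hom = word_act_linear[unfolded linear_iff_module_hom]
lemmas word_act_zero [simp] = module_hom.zero[OF word_act_hom]
  and word_act_add = module_hom.add[OF word_act_hom]
  and word_act_scale = module_hom.scale[OF word_act_hom]

lemma half_of_double:
  assumes "x + x = y"
  shows "x = sc (1/2) y"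
proof -
  have "sc (1/2) (x + x) = sc (1/2 + 1/2) x"
    by (simp only: scale_right_distrib scale_left_distrib)
  then show ?thesis
    using assms by simp
qed

lemma word_in_gen_module:
  "admissible_word mu ws \<Longrightarrow> word_act phi ws psi \<in> gen_module sc phi mu psi"
  unfolding gen_module_def by (auto intro: span_base)

lemma word_anticomm:
  assumes "admissible_word mu (pre @ (m, r) # (n, s) # post)"
  shows "word_act phi (pre @ (m, r) # (n, s) # post) psi
           + sc ((-1) ^ (m + n)) (word_act phi (pre @ (n, s) # (m, r) # post) psi)
         = (if m + n = 2 \<and> r + s = 0 then sc (S m n) (word_act phi (pre @ post) psi) else 0)"
proof -
  let ?v = "word_act phi post psi"
  have "?v \<in> gen_module sc phi mu psi"
    using assms by (intro word_in_gen_module) simp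
  then have "phi m r (phi n s ?v) + sc ((-1) ^ (m + n)) (phi n s (phi m r ?v))
      = (if m + n = 2 \<and> r + s = 0 then sc (S m n) ?v else 0)"
    using assms by (intro anticomm) auto
  from arg_cong[OF this, of "word_act phi pre"] show ?thesis
    by (auto simp: word_act_add word_act_scale split: if_splits)
qed

lemma word_above_threshold:
  assumes "admissible_word mu ws" and "ws \<noteq> []"
    and "snd (last ws) > theta mu (fst (last ws)) - 1/2"
  shows "word_act phi ws psi = 0"
proof -
  obtain m r where last: "last ws = (m, r)" by fastforce
  have ws: "ws = butlast ws @ [(m, r)]"
    using assms(2) last by (metis append_butlast_last_id)
  have "(m, r) \<in> set ws"
    using assms(2) last last_in_set by metis
  then have "m \<le> 2" "mode_index mu r"
    using assms(1) by (auto simp: admissible_word_def)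
  then have "phi m r psi = 0"
    using assms(3) last by (intro annih) auto
  then show ?thesis
    by (subst ws) simp
qed

lemma sorted_word_in_ordered_span:
  assumes "admissible_word mu ws"
    and "\<forall>i. Suc i < length ws \<longrightarrow> mode_precedes (ws ! i) (ws ! Suc i)"
  shows "word_act phi ws psi \<in> ordered_span"
proof (cases "ws \<noteq> [] \<and> snd (last ws) > theta mu (fst (last ws)) - 1/2")
  case True
  then show ?thesis
    using assms(1) word_above_threshold by (simp add: ordered_span_def span_zero)
next
  case False
  then have "ordered_word mu ws"
    using assms by (auto simp: ordered_word_iff)
  then show ?thesis
    unfolding ordered_span_def by (auto intro: span_base)
qed

lemma unsorted_word_in_ordered_span:
  assumes adm: "admissible_word mu (pre @ (m, r) # (n, s) # post)"
    and unordered: "\<not> mode_precedes (m, r) (n, s)"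
    and shorter: "word_act phi (pre @ post) psi \<in> ordered_span"
    and swapped: "mode_precedes (n, s) (m, r) \<Longrightarrow>
      word_act phi (pre @ (n, s) # (m, r) # post) psi \<in> ordered_span"
  shows "word_act phi (pre @ (m, r) # (n, s) # post) psi \<in> ordered_span"
proof -
  let ?w = "word_act phi (pre @ (m, r) # (n, s) # post) psi"
    and ?w' = "word_act phi (pre @ (n, s) # (m, r) # post) psi"
    and ?contraction =
      "if m + n = 2 \<and> r + s = 0 then sc (S m n) (word_act phi (pre @ post) psi) else 0"
  have contraction: "?contraction \<in> ordered_span"
    using shorter by (simp add: ordered_span_def span_scale span_zero)
  have anticomm_w: "?w + sc ((-1) ^ (m + n)) ?w' = ?contraction"
    using word_anticomm[OF adm] .
  consider "(m, r) = (n, s)" | "mode_precedes (n, s) (m, r)"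
    using unordered mode_precedes_total by blast
  then show ?thesis
  proof cases
    case 1
    then have "?w = sc (1/2) ?contraction"
      using anticomm_w by (intro half_of_double) simp
    then show ?thesis
      using contraction by (simp add: ordered_span_def span_scale)
  next
    case 2
    have "?w = ?contraction - sc ((-1) ^ (m + n)) ?w'"
      using anticomm_w by (simp add: eq_diff_eq)
    then show ?thesis
      using contraction swapped[OF 2] by (simp add: ordered_span_def span_diff span_scale)
  qed
qed

lemma admissible_word_in_ordered_span:
  "admissible_word mu ws \<Longrightarrow> word_act phi ws psi \<in> ordered_span"
proof (induction ws rule: wf_induct_rule[OF wf_measures[of "[length, inversions]"],
    consumes 0, case_names less])
  case (less ws)
  show ?case
  proof (cases "\<forall>i. Suc i < length ws \<longrightarrow> mode_precedes (ws ! i) (ws ! Suc i)")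
    case True
    with less.prems show ?thesis
      by (rule sorted_word_in_ordered_span)
  next
    case False
    then obtain pre m r n s post where ws: "ws = pre @ (m, r) # (n, s) # post"
      and unordered: "\<not> mode_precedes (m, r) (n, s)"
      using not_sorted_adjacent_split[OF False] by (metis prod.exhaust)
    show ?thesis
      unfolding ws
    proof (rule unsorted_word_in_ordered_span[OF _ unordered])
      show "admissible_word mu (pre @ (m, r) # (n, s) # post)"
        using less.prems ws by simp
      show "word_act phi (pre @ post) psi \<in> ordered_span"
        using less.IH[of "pre @ post"] less.prems ws by simp
      show "word_act phi (pre @ (n, s) # (m, r) # post) psi \<in> ordered_span"
        if "mode_precedes (n, s) (m, r)"
        using less.IH[of "pre @ (n, s) # (m, r) # post"] less.prems ws inversions_swap[OF that]
        by simp
    qed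
  qed
qed

end

theorem proposition8:
  fixes sc :: "complex \<Rightarrow> 'v::ab_group_add \<Rightarrow> 'v"
    and phi :: "nat \<Rightarrow> real \<Rightarrow> 'v \<Rightarrow> 'v"
    and S :: "nat \<Rightarrow> nat \<Rightarrow> complex"
    and psi :: 'v
    and mu :: nat
  assumes mu: "mu \<le> 1"
    and vs: "vector_space sc"
    and lin: "\<And>m r. Vector_Spaces.linear sc sc (phi m r)"
    and S_nz: "\<And>m n. m \<le> 2 \<Longrightarrow> n \<le> 2 \<Longrightarrow> S m n \<noteq> 0"
    and anticomm: "\<And>m n r s v. m \<le> 2 \<Longrightarrow> n \<le> 2 \<Longrightarrow> mode_index mu r \<Longrightarrow> mode_index mu s \<Longrightarrow>
        v \<in> gen_module sc phi mu psi \<Longrightarrow>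
        phi m r (phi n s v) + sc ((-1) ^ (m + n)) (phi n s (phi m r v))
          = (if m + n = 2 \<and> r + s = 0 then sc (S m n) v else 0)"
    and annih: "\<And>m r. m \<le> 2 \<Longrightarrow> mode_index mu r \<Longrightarrow> r > theta mu m - 1/2 \<Longrightarrow> phi m r psi = 0"
  shows "gen_module sc phi mu psi = module.span sc {word_act phi ws psi | ws. ordered_word mu ws}"
proof -
  interpret mode_module sc phi S psi mu
    by (intro mode_module.intro mode_module_axioms.intro vs lin anticomm annih)
  have "{word_act phi ws psi | ws. admissible_word mu ws} \<subseteq> ordered_span"
    using admissible_word_in_ordered_span by blast
  then have "gen_module sc phi mu psi \<subseteq> ordered_span"
    unfolding gen_module_def by (rule span_minimal) (simp add: ordered_span_def)
  moreover have "ordered_span \<subseteq> gen_module sc phi mu psi"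
    unfolding gen_module_def ordered_span_def by (rule span_mono) (auto simp: ordered_word_def)
  ultimately show ?thesis
    by (simp add: ordered_span_def)
qed

end
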